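(* Let $\mathbf C$ be a clone $\tau$-algebra and $a,b\in C$ of finite dimension. Then: (1) for $f\in R_{\mathbf C}$ of arity $n$ and $g\in R_{\mathbf C}$ of arity $k$, $f$ and $g$ are similar if and only if $f(\mathsf e_1,\dots,\mathsf e_n)=g(\mathsf e_1,\dots,\mathsf e_k)$; (2) $R(a)$ is a block; (3) if $R(a)=R(b)$ then $a=b$; (4) $R_{\mathbf C}=\bigcup_{c\in\mathrm{Fi}\,\mathbf C}R(c)$ and it is a clone on the $\tau$-reduct $\mathbf C_\tau$; (5) the block $R(a)$ has arity $k$ if and only if $a$ has dimension $k$.
   Context: A clone $\tau$-algebra is an algebra $\mathbf C=(C,\sigma^{\mathbf C}\ (\sigma\in\tau),q_n^{\mathbf C}\ (n\ge0),\mathsf e_i^{\mathbf C}\ (i\ge1))$ with $\mathsf e_i$ nullary, $q_n$ of arity $n+1$, satisfying: (C1) $q_n(\mathsf e_i,x_1,\dots,x_n)=x_i$ ($1\le i\le n$); (C2) $q_n(\mathsf e_j,x_1,\dots,x_n)=\mathsf e_j$ ($j>n$); (C3) $q_n(x,\mathsf e_1,\dots,\mathsf e_n)=x$; (C4) $q_k(x,y_1,\dots,y_k)=q_n(x,y_1,\dots,y_k,\mathsf e_{k+1},\dots,\mathsf e_n)$ ($n>k$); (C5) $q_n(q_n(x,\mathbf y),\mathbf z)=q_n(x,q_n(y_1,\mathbf z),\dots,q_n(y_n,\mathbf z))$; (C6) $q_n(\sigma(x_1,\dots,x_k),\mathbf y)=\sigma(q_n(x_1,\mathbf y),\dots,q_n(x_k,\mathbf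 y))$ for $\sigma\in\tau$ of arity $k$. $a$ is independent of $\mathsf e_n$ if $q_n(a,\mathsf e_1,\dots,\mathsf e_{n-1},\mathsf e_{n+1})=a$; its dimension is $0$ if it depends on no $\mathsf e_n$, otherwise the largest $n$ it depends on (infinite if infinitely many). $\mathrm{Fi}\,\mathbf C$ is the set of finite-dimensional elements. A function $f:C^k\to C$ is $\mathbf C$-representable if $f(\mathsf e_1,\dots,\mathsf e_k)$ has dimension $\le k$ and $f(a_1,\dots,a_k)=q_k(f(\mathsf e_1,\dots,\mathsf e_k),a_1,\dots,a_k)$ for all $a_i$; $R_{\mathbf C}$ is the set of all of them. For finite-dimensional $a$, $R(a)$ is the set of $\mathbf C$-representable $f$ (of any arity $n$) with $f(\mathsf e_1,\dots,\mathsf e_n)=a$. For finitary operations $f:A^k\to A$, $g:A^n\to A$, write $f\preceq g$ if $k\le n$ and $f(\mathbf a)=g(\mathbf a,\mathbf b)$ for all $\mathbf a\in A^k$, $\mathbf b\in A^{n-k}$; $f,g$ are similar if $f\preceq g$ or $g\preceq f$. Similarity is an equivalence relation; its classes are blocks, each has a $\preceq$-least element, and the arity of a block is the arity of that least element. A clone on a $\tau$-algebra $\mathbf A$ is a set of finitary operations on $A$ (nullary included) containing all projections and all basic operations, closed under composition and under restriction (dropping a last argument on which the operation does not depend). *)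

theory Defs
  imports Main
begin

text \<open>The carrier of the clone tau-algebra is the whole type 'a
(carriers are nonempty since they contain e 1). The signature tau is the type 's
of operation symbols with arity function ar; sig s interprets symbol s, applied
to argument lists of length ar s. The operation q_n (arity n+1) is q n x ys with
length ys = n; the nullary constants are e i (i >= 1; e 0 is unused).

A finitary operation of arity k on 'a is a pair (k, f) with f :: 'a list => 'a,
normalised so that f xs = undefined whenever length xs differs from k. In this
way two operations are equal iff they have the same arity and agree on A^k.\<close>

definition es :: "(nat \<Rightarrow> 'a) \<Rightarrow> nat \<Rightarrow> 'a list" where
  "es e n = map e [1..<Suc n]"

definition clone_algebra ::
  "('s \<Rightarrow> nat) \<Rightarrow> ('s \<Rightarrow> 'a list \<Rightarrow> 'a) \<Rightarrow> (nat \<Rightarrow> 'a \<Rightarrow> 'a list \<Rightarrow> 'a) \<Rightarrow> (nat \<Rightarrow> 'a) \<Rightarrow> bool" where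
  "clone_algebra ar sig q e \<longleftrightarrow>
     (\<forall>n i ys. 1 \<le> i \<and> i \<le> n \<and> length ys = n \<longrightarrow> q n (e i) ys = ys ! (i - 1)) \<and>
     (\<forall>n j ys. n < j \<and> length ys = n \<longrightarrow> q n (e j) ys = e j) \<and>
     (\<forall>n x. q n x (es e n) = x) \<and>
     (\<forall>n k x ys. k < n \<and> length ys = k \<longrightarrow> q k x ys = q n x (ys @ map e [Suc k..<Suc n])) \<and>
     (\<forall>n x ys zs. length ys = n \<and> length zs = n \<longrightarrow>
        q n (q n x ys) zs = q n x (map (\<lambda>y. q n y zs) ys)) \<and>
     (\<forall>s n xs ys. length xs = ar s \<and> length ys = n \<longrightarrow>
        q n (sig s xs) ys = sig s (map (\<lambda>x. q n x ys) xs))"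

definition indep :: "(nat \<Rightarrow> 'a \<Rightarrow> 'a list \<Rightarrow> 'a) \<Rightarrow> (nat \<Rightarrow> 'a) \<Rightarrow> 'a \<Rightarrow> nat \<Rightarrow> bool" where
  "indep q e a n \<longleftrightarrow> q n a (map e [1..<n] @ [e (Suc n)]) = a"

definition depset :: "(nat \<Rightarrow> 'a \<Rightarrow> 'a list \<Rightarrow> 'a) \<Rightarrow> (nat \<Rightarrow> 'a) \<Rightarrow> 'a \<Rightarrow> nat set" where
  "depset q e a = {n. 1 \<le> n \<and> \<not> indep q e a n}"

definition finite_dim :: "(nat \<Rightarrow> 'a \<Rightarrow> 'a list \<Rightarrow> 'a) \<Rightarrow> (nat \<Rightarrow> 'a) \<Rightarrow> 'a \<Rightarrow> bool" where
  "finite_dim q e a \<longleftrightarrow> finite (depset q e a)"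

text \<open>dimension of a finite-dimensional element (0 if it depends on no e_n)\<close>
definition dim :: "(nat \<Rightarrow> 'a \<Rightarrow> 'a list \<Rightarrow> 'a) \<Rightarrow> (nat \<Rightarrow> 'a) \<Rightarrow> 'a \<Rightarrow> nat" where
  "dim q e a = (if depset q e a = {} then 0 else Max (depset q e a))"

definition Fi :: "(nat \<Rightarrow> 'a \<Rightarrow> 'a list \<Rightarrow> 'a) \<Rightarrow> (nat \<Rightarrow> 'a) \<Rightarrow> 'a set" where
  "Fi q e = {a. finite_dim q e a}"

type_synonym 'a op = "nat \<times> ('a list \<Rightarrow> 'a)"

definition is_op :: "'a op \<Rightarrow> bool" where
  "is_op F \<longleftrightarrow> (\<forall>xs. length xs \<noteq> fst F \<longrightarrow> snd F xs = undefined)"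

definition Ops :: "'a op set" where
  "Ops = {F. is_op F}"

definition mk_op :: "nat \<Rightarrow> ('a list \<Rightarrow> 'a) \<Rightarrow> 'a op" where
  "mk_op k f = (k, \<lambda>xs. if length xs = k then f xs else undefined)"

definition representable :: "(nat \<Rightarrow> 'a \<Rightarrow> 'a list \<Rightarrow> 'a) \<Rightarrow> (nat \<Rightarrow> 'a) \<Rightarrow> 'a op \<Rightarrow> bool" where
  "representable q e F \<longleftrightarrow> is_op F \<and>
     (let k = fst F; f = snd F in
       finite_dim q e (f (es e k)) \<and> dim q e (f (es e k)) \<le> k \<and>
       (\<forall>as. length as = k \<longrightarrow> f as = q k (f (es e k)) as))"

definition RC :: "(nat \<Rightarrow> 'a \<Rightarrow> 'a list \<Rightarrow> 'a) \<Rightarrow> (nat \<Rightarrow> 'a) \<Rightarrow> 'a op set" where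
  "RC q e = {F. representable q e F}"

definition Rof :: "(nat \<Rightarrow> 'a \<Rightarrow> 'a list \<Rightarrow> 'a) \<Rightarrow> (nat \<Rightarrow> 'a) \<Rightarrow> 'a \<Rightarrow> 'a op set" where
  "Rof q e a = {F \<in> RC q e. snd F (es e (fst F)) = a}"

definition prec_op :: "'a op \<Rightarrow> 'a op \<Rightarrow> bool" where
  "prec_op F G \<longleftrightarrow> fst F \<le> fst G \<and>
     (\<forall>as bs. length as = fst F \<and> length bs = fst G - fst F \<longrightarrow> snd F as = snd G (as @ bs))"

definition similar :: "'a op \<Rightarrow> 'a op \<Rightarrow> bool" where
  "similar F G \<longleftrightarrow> prec_op F G \<or> prec_op G F"

definition is_block :: "'a op set \<Rightarrow> bool" where
  "is_block B \<longleftrightarrow> (\<exists>F\<in>Ops. B = {G \<in> Ops. similar F G})"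

definition block_arity :: "'a op set \<Rightarrow> nat" where
  "block_arity B = fst (THE F. F \<in> B \<and> (\<forall>G\<in>B. prec_op F G))"

definition proj_op :: "nat \<Rightarrow> nat \<Rightarrow> 'a op" where
  "proj_op n i = mk_op n (\<lambda>xs. xs ! (i - 1))"

definition compose_op :: "'a op \<Rightarrow> nat \<Rightarrow> 'a op list \<Rightarrow> 'a op" where
  "compose_op F n Gs = mk_op n (\<lambda>xs. snd F (map (\<lambda>G. snd G xs) Gs))"

definition is_clone :: "('s \<Rightarrow> nat) \<Rightarrow> ('s \<Rightarrow> 'a list \<Rightarrow> 'a) \<Rightarrow> 'a op set \<Rightarrow> bool" where
  "is_clone ar sig K \<longleftrightarrow> K \<subseteq> Ops \<and>
     (\<forall>n i. 1 \<le> i \<and> i \<le> n \<longrightarrow> proj_op n i \<in> K) \<and>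
     (\<forall>s. mk_op (ar s) (sig s) \<in> K) \<and>
     (\<forall>F\<in>K. \<forall>n Gs. length Gs = fst F \<and> (\<forall>G\<in>set Gs. G \<in> K \<and> fst G = n) \<longrightarrow>
        compose_op F n Gs \<in> K) \<and>
     (\<forall>F\<in>K. \<forall>n. fst F = Suc n \<and>
        (\<forall>xs b b'. length xs = n \<longrightarrow> snd F (xs @ [b]) = snd F (xs @ [b'])) \<longrightarrow>
        mk_op n (\<lambda>xs. snd F (xs @ [undefined])) \<in> K)"

end

theory Submission imports Defs begin

text \<open>An element c of dimension at most k acts through q_k as a k-ary operation on C,
and for M >= k the operation q_M c depends only on its first k arguments: independence
of e_M together with (C5) lets one drop the last argument of q_M c.  Hence the
representable operations f with f(e_1, ..., e_n) = c are exactly the dummy extensions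
of the (dim c)-ary operation q_(dim c) c, which is the least element of its similarity
block.  Closure of the representable operations under composition is the
superassociativity law (C5) restricted to finite-dimensional elements; basic operations
are representable by (C6).\<close>

lemma es_length [simp]: "length (es e n) = n"
  by (simp add: es_def del: upt_Suc)

lemma es_nth [simp]: "i < n \<Longrightarrow> es e n ! i = e (Suc i)"
  by (simp add: es_def del: upt_Suc)

lemma es_append_map_upt: "n \<le> m \<Longrightarrow> es e n @ map e [Suc n..<Suc m] = es e m"
  by (rule nth_equalityI) (auto simp: nth_append intro!: arg_cong[where f=e])

lemma take_es: "k \<le> n \<Longrightarrow> take k (es e n) = es e k"
  by (rule nth_equalityI) auto

lemma es_Suc: "es e (Suc n) = es e n @ [e (Suc n)]"
  using es_append_map_upt[of n "Suc n" e] by simp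

lemma map_upt_eq_es: "1 \<le> j \<Longrightarrow> map e [1..<j] = es e (j - 1)"
  by (simp add: es_def del: upt_Suc)

lemma fst_mk_op [simp]: "fst (mk_op k f) = k"
  by (simp add: mk_op_def)

lemma snd_mk_op: "snd (mk_op k f) xs = (if length xs = k then f xs else undefined)"
  by (simp add: mk_op_def)

lemma is_op_mk_op [simp]: "is_op (mk_op k f)"
  by (simp add: mk_op_def is_op_def)

lemma op_eqI:
  assumes "is_op F" "is_op G" "fst F = fst G"
    and "\<And>as. length as = fst F \<Longrightarrow> snd F as = snd G as"
  shows "F = G"
proof -
  have "snd F = snd G"
  proof
    fix xs
    show "snd F xs = snd G xs"
      using assms unfolding is_op_def by (cases "length xs = fst F") auto
  qed
  then show ?thesis
    using assms(3) by (simp add: prod_eq_iff)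
qed

lemma prec_op_fst_le: "prec_op F G \<Longrightarrow> fst F \<le> fst G"
  by (simp add: prec_op_def)

lemma finite_dim_dim_leI:
  assumes "\<And>j. k < j \<Longrightarrow> indep q e c j"
  shows "finite_dim q e c \<and> dim q e c \<le> k"
proof -
  have sub: "depset q e c \<subseteq> {1..k}"
  proof
    fix j
    assume "j \<in> depset q e c"
    then show "j \<in> {1..k}"
      using assms[of j] by (cases "k < j") (auto simp: depset_def)
  qed
  then have "finite (depset q e c)"
    using finite_subset by blast
  with sub show ?thesis
    by (auto simp: dim_def finite_dim_def)
qed

lemma indep_if_dim_less:
  assumes "finite_dim q e c" "dim q e c < j" "1 \<le> j"
  shows "indep q e c j"
proof (rule ccontr)
  assume "\<not> indep q e c j"
  then have "j \<in> depset q e c"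
    using assms(3) by (simp add: depset_def)
  with assms(1,2) show False
    by (auto simp: dim_def finite_dim_def split: if_splits)
qed

lemma not_indep_dim:
  assumes "finite_dim q e c" "0 < dim q e c"
  shows "\<not> indep q e c (dim q e c)"
proof -
  have "depset q e c \<noteq> {}"
    using assms(2) by (auto simp: dim_def)
  then have "dim q e c \<in> depset q e c"
    using assms(1) by (simp add: dim_def finite_dim_def)
  then show ?thesis
    by (simp add: depset_def)
qed

locale clone_alg =
  fixes ar :: "'s \<Rightarrow> nat" and sig :: "'s \<Rightarrow> 'a list \<Rightarrow> 'a"
    and q :: "nat \<Rightarrow> 'a \<Rightarrow> 'a list \<Rightarrow> 'a" and e :: "nat \<Rightarrow> 'a"
  assumes clone_algebra: "clone_algebra ar sig q e"
begin

lemma q_e_nth: "1 \<le> i \<Longrightarrow> i \<le> n \<Longrightarrow> length ys = n \<Longrightarrow> q n (e i) ys = ys ! (i - 1)"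
  and q_e_beyond: "n < j \<Longrightarrow> length ys = n \<Longrightarrow> q n (e j) ys = e j"
  and q_es: "q n x (es e n) = x"
  and q_pad: "k < n \<Longrightarrow> length ys = k \<Longrightarrow> q k x ys = q n x (ys @ map e [Suc k..<Suc n])"
  and q_q: "length ys = n \<Longrightarrow> length zs = n \<Longrightarrow>
      q n (q n x ys) zs = q n x (map (\<lambda>y. q n y zs) ys)"
  and q_sig: "length xs = ar s \<Longrightarrow> length ys = n \<Longrightarrow>
      q n (sig s xs) ys = sig s (map (\<lambda>x. q n x ys) xs)"
  using clone_algebra unfolding clone_algebra_def by metis+

lemma q_pad_le: "n \<le> M \<Longrightarrow> length xs = n \<Longrightarrow> q n x xs = q M x (xs @ map e [Suc n..<Suc M])"
  using q_pad[of n M xs x] by (cases "n = M") auto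

lemma map_q_es: "k \<le> n \<Longrightarrow> length zs = n \<Longrightarrow> map (\<lambda>y. q n y zs) (es e k) = take k zs"
  by (rule nth_equalityI) (auto simp: q_e_nth)

lemma q_Suc_if_indep:
  assumes ind: "indep q e c (Suc m)" and len: "length ys = Suc m"
  shows "q (Suc m) c ys = q m c (take m ys)"
proof -
  let ?u = "es e m @ [e (Suc (Suc m))]"
  have c: "q (Suc m) c ?u = c"
    using ind map_upt_eq_es[of "Suc m" e] by (simp add: indep_def)
  \<comment> \<open>(C5) applied to c = q_(m+1) c u replaces the last argument by e_(m+2)\<close>
  have last_irrelevant: "q (Suc m) c zs = q (Suc m) c (take m zs @ [e (Suc (Suc m))])"
    if "length zs = Suc m" for zs
  proof -
    have "q (Suc m) c zs = q (Suc m) (q (Suc m) c ?u) zs"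
      using c by simp
    also have "\<dots> = q (Suc m) c (map (\<lambda>y. q (Suc m) y zs) ?u)"
      using that by (simp add: q_q)
    also have "map (\<lambda>y. q (Suc m) y zs) ?u = take m zs @ [e (Suc (Suc m))]"
      using that by (simp add: map_q_es q_e_beyond)
    finally show ?thesis .
  qed
  have "q m c (take m ys) = q (Suc m) c (take m ys @ [e (Suc m)])"
    using q_pad[of m "Suc m" "take m ys" c] len by simp
  also have "\<dots> = q (Suc m) c ys"
    using last_irrelevant[of "take m ys @ [e (Suc m)]"] last_irrelevant[OF len] len by simp
  finally show ?thesis
    by simp
qed

lemma q_eq_q_take:
  assumes fd: "finite_dim q e c" and dk: "dim q e c \<le> k"
  shows "k \<le> M \<Longrightarrow> length ys = M \<Longrightarrow> q M c ys = q k c (take k ys)"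
proof (induction M arbitrary: ys)
  case 0
  then show ?case by simp
next
  case (Suc M)
  show ?case
  proof (cases "k = Suc M")
    case True
    with Suc show ?thesis by simp
  next
    case False
    with Suc.prems have kM: "k \<le> M" by simp
    have "indep q e c (Suc M)"
      using indep_if_dim_less[OF fd] dk kM by simp
    then have "q (Suc M) c ys = q M c (take M ys)"
      using q_Suc_if_indep Suc.prems by blast
    also have "\<dots> = q k c (take k ys)"
      using Suc.IH[OF kM] Suc.prems kM by (simp add: min_def)
    finally show ?thesis .
  qed
qed

lemma q_q_finite_dim:
  assumes fd: "finite_dim q e c" and dk: "dim q e c \<le> k"
    and lc: "length cs = k" and lx: "length xs = n"
  shows "q n (q k c cs) xs = q k c (map (\<lambda>y. q n y xs) cs)"
proof -
  \<comment> \<open>pad both argument lists to the common length M, apply (C5) and drop the padding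
    of cs again, which c ignores since dim c \<le> k\<close>
  define M where "M = max k n"
  define pc where "pc = map e [Suc k..<Suc M]"
  define px where "px = map e [Suc n..<Suc M]"
  have lpc: "length (cs @ pc) = M" and lpx: "length (xs @ px) = M"
    using lc lx by (simp_all add: pc_def px_def M_def)
  have pad_x: "q n y xs = q M y (xs @ px)" for y
    using q_pad_le[of n M xs] lx by (simp add: M_def px_def)
  have "q n (q k c cs) xs = q M (q M c (cs @ pc)) (xs @ px)"
    using pad_x q_pad_le[of k M cs] lc by (simp add: M_def pc_def)
  also have "\<dots> = q M c (map (\<lambda>y. q M y (xs @ px)) (cs @ pc))"
    using q_q lpc lpx by blast
  also have "\<dots> = q k c (map (\<lambda>y. q M y (xs @ px)) cs)"
    using q_eq_q_take[OF fd dk, of M] lpc lc by (simp add: M_def)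
  finally show ?thesis
    using pad_x by simp
qed

lemma indep_q:
  assumes fd: "finite_dim q e c" and dk: "dim q e c \<le> k"
    and lc: "length cs = k" and ind: "\<forall>y\<in>set cs. indep q e y j" and j: "1 \<le> j"
  shows "indep q e (q k c cs) j"
proof -
  let ?u = "map e [1..<j] @ [e (Suc j)]"
  have "length ?u = j"
    using j by simp
  then have "q j (q k c cs) ?u = q k c (map (\<lambda>y. q j y ?u) cs)"
    by (rule q_q_finite_dim[OF fd dk lc])
  also have "map (\<lambda>y. q j y ?u) cs = cs"
    using ind by (induction cs) (auto simp: indep_def)
  finally show ?thesis
    by (simp add: indep_def)
qed

abbreviation at_es :: "'a op \<Rightarrow> 'a" where
  "at_es F \<equiv> snd F (es e (fst F))"

lemma RC_iff:
  "F \<in> RC q e \<longleftrightarrow> is_op F \<and> finite_dim q e (at_es F) \<and> dim q e (at_es F) \<le> fst F \<and>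
    (\<forall>as. length as = fst F \<longrightarrow> snd F as = q (fst F) (at_es F) as)"
  by (simp only: RC_def representable_def Let_def mem_Collect_eq)

lemma RC_D:
  assumes "F \<in> RC q e"
  shows "is_op F" "finite_dim q e (at_es F)" "dim q e (at_es F) \<le> fst F"
    "length as = fst F \<Longrightarrow> snd F as = q (fst F) (at_es F) as"
  using assms unfolding RC_iff by blast+

lemma RC_I:
  assumes "is_op F" "finite_dim q e (at_es F)" "dim q e (at_es F) \<le> fst F"
    "\<And>as. length as = fst F \<Longrightarrow> snd F as = q (fst F) (at_es F) as"
  shows "F \<in> RC q e"
  unfolding RC_iff using assms by blast

lemma at_es_eq_if_prec_op:
  assumes "prec_op F G"
  shows "at_es F = at_es G"
proof -
  have le: "fst F \<le> fst G"
    using assms by (rule prec_op_fst_le)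
  have "at_es F = snd G (es e (fst F) @ map e [Suc (fst F)..<Suc (fst G)])"
    using assms unfolding prec_op_def by force
  then show ?thesis
    using es_append_map_upt[OF le, of e] by simp
qed

lemma prec_op_if_at_es_eq:
  assumes F: "F \<in> RC q e" and G: "G \<in> RC q e"
    and eq: "at_es F = at_es G" and le: "fst F \<le> fst G"
  shows "prec_op F G"
  unfolding prec_op_def
proof (intro conjI le allI impI)
  fix as bs :: "'a list"
  assume l: "length as = fst F \<and> length bs = fst G - fst F"
  have "snd G (as @ bs) = q (fst G) (at_es G) (as @ bs)"
    using RC_D(4)[OF G, of "as @ bs"] l le by simp
  also have "\<dots> = q (fst F) (at_es F) as"
    using q_eq_q_take[OF RC_D(2,3)[OF F], of "fst G" "as @ bs"] eq l le by simp
  also have "\<dots> = snd F as"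
    using RC_D(4)[OF F, of as] l by simp
  finally show "snd F as = snd G (as @ bs)"
    by simp
qed

lemma similar_iff_at_es_eq:
  assumes "F \<in> RC q e" "G \<in> RC q e"
  shows "similar F G \<longleftrightarrow> at_es F = at_es G"
proof
  assume "similar F G"
  then show "at_es F = at_es G"
    using at_es_eq_if_prec_op[of F G] at_es_eq_if_prec_op[of G F] by (auto simp: similar_def)
next
  assume "at_es F = at_es G"
  then show "similar F G"
    using prec_op_if_at_es_eq[OF assms] prec_op_if_at_es_eq[OF assms(2,1)] nat_le_linear
    unfolding similar_def by metis
qed

definition least_rep :: "'a \<Rightarrow> 'a op" where
  "least_rep a = mk_op (dim q e a) (q (dim q e a) a)"

lemma fst_least_rep [simp]: "fst (least_rep a) = dim q e a"
  by (simp add: least_rep_def)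

lemma at_es_least_rep [simp]: "snd (least_rep a) (es e (dim q e a)) = a"
  by (simp add: least_rep_def snd_mk_op q_es)

lemma least_rep_in_Rof: "finite_dim q e a \<Longrightarrow> least_rep a \<in> Rof q e a"
  unfolding Rof_def by (auto intro!: RC_I simp: least_rep_def snd_mk_op q_es)

lemma Rof_subset_RC: "Rof q e a \<subseteq> RC q e"
  by (auto simp: Rof_def)

lemma dim_le_fst_if_in_Rof: "G \<in> Rof q e a \<Longrightarrow> dim q e a \<le> fst G"
  unfolding Rof_def using RC_D(3) by auto

lemma prec_op_least_rep_if_in_Rof:
  assumes "finite_dim q e a" "G \<in> Rof q e a"
  shows "prec_op (least_rep a) G"
  using assms least_rep_in_Rof[OF assms(1)] dim_le_fst_if_in_Rof[OF assms(2)]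
  by (intro prec_op_if_at_es_eq) (auto simp: Rof_def)

lemma eq_least_rep_if_prec_op:
  assumes fd: "finite_dim q e a" and p: "prec_op G (least_rep a)" and G: "is_op G"
  shows "G = least_rep a"
proof -
  let ?n = "dim q e a" and ?m = "fst G"
  have mn: "?m \<le> ?n"
    using prec_op_fst_le[OF p] by simp
  have G_eq: "snd G as = q ?n a (as @ bs)" if "length as = ?m" "length bs = ?n - ?m" for as bs
    using p that unfolding prec_op_def by (simp add: least_rep_def snd_mk_op)
  have "?m = ?n"
  proof (rule ccontr)
    assume "?m \<noteq> ?n"
    with mn have lt: "?m < ?n" by simp
    \<comment> \<open>G ignores the padding after e_1, ..., e_m, so padding with e_(m+1), ..., e_n
      or with e_(m+1), ..., e_(n-1), e_(n+1) gives the same value: a is independent of e_n\<close>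
    have "snd G (es e ?m) = q ?n a (es e ?m @ map e [Suc ?m..<Suc ?n])"
      by (rule G_eq) auto
    also have "\<dots> = a"
      using es_append_map_upt[of ?m ?n e] mn by (simp add: q_es)
    finally have "snd G (es e ?m) = a" .
    moreover have "snd G (es e ?m) = q ?n a (es e ?m @ (map e [Suc ?m..<?n] @ [e (Suc ?n)]))"
      by (rule G_eq) (use lt in auto)
    moreover have "es e ?m @ (map e [Suc ?m..<?n] @ [e (Suc ?n)]) = map e [1..<?n] @ [e (Suc ?n)]"
      using es_append_map_upt[of ?m "?n - 1" e] map_upt_eq_es[of ?n e] lt by simp
    ultimately have "indep q e a ?n"
      by (simp add: indep_def)
    then show False
      using not_indep_dim[OF fd] lt by simp
  qed
  then show ?thesis
    using G_eq[of _ "[]"] G by (intro op_eqI) (auto simp: least_rep_def snd_mk_op)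
qed

lemma in_Rof_if_least_rep_prec_op:
  assumes fd: "finite_dim q e a" and p: "prec_op (least_rep a) G" and G: "is_op G"
  shows "G \<in> Rof q e a"
proof -
  let ?n = "dim q e a" and ?m = "fst G"
  have mn: "?n \<le> ?m"
    using prec_op_fst_le[OF p] by simp
  have G_eq: "snd G ys = q ?m a ys" if l: "length ys = ?m" for ys
  proof -
    have "snd G ys = snd G (take ?n ys @ drop ?n ys)"
      by simp
    also have "\<dots> = snd (least_rep a) (take ?n ys)"
      using p l mn unfolding prec_op_def by (metis length_drop length_take min.absorb2 fst_least_rep)
    also have "\<dots> = q ?n a (take ?n ys)"
      using l mn by (simp add: least_rep_def snd_mk_op)
    also have "\<dots> = q ?m a ys"
      using q_eq_q_take[OF fd order_refl mn l] by simp
    finally show ?thesis .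
  qed
  have "at_es G = a"
    using G_eq[of "es e ?m"] by (simp add: q_es)
  with G fd mn G_eq show ?thesis
    unfolding Rof_def by (auto intro: RC_I)
qed

lemma Rof_eq_similar_least_rep:
  assumes fd: "finite_dim q e a"
  shows "Rof q e a = {G \<in> Ops. similar (least_rep a) G}"
proof (intro equalityI subsetI)
  fix G
  assume G: "G \<in> Rof q e a"
  then have "is_op G"
    using Rof_subset_RC RC_D(1) by blast
  with G show "G \<in> {G \<in> Ops. similar (least_rep a) G}"
    using prec_op_least_rep_if_in_Rof[OF fd G] by (simp add: Ops_def similar_def)
next
  fix G
  assume "G \<in> {G \<in> Ops. similar (least_rep a) G}"
  then have G: "is_op G" and "prec_op (least_rep a) G \<or> prec_op G (least_rep a)"
    by (auto simp: Ops_def similar_def)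
  then show "G \<in> Rof q e a"
    using in_Rof_if_least_rep_prec_op[OF fd] eq_least_rep_if_prec_op[OF fd]
      least_rep_in_Rof[OF fd] by blast
qed

lemma block_arity_Rof:
  assumes fd: "finite_dim q e a"
  shows "block_arity (Rof q e a) = dim q e a"
proof -
  have "(THE F. F \<in> Rof q e a \<and> (\<forall>G\<in>Rof q e a. prec_op F G)) = least_rep a"
  proof (rule the_equality)
    show "least_rep a \<in> Rof q e a \<and> (\<forall>G\<in>Rof q e a. prec_op (least_rep a) G)"
      using least_rep_in_Rof[OF fd] prec_op_least_rep_if_in_Rof[OF fd] by blast
  next
    fix F
    assume "F \<in> Rof q e a \<and> (\<forall>G\<in>Rof q e a. prec_op F G)"
    then show "F = least_rep a"
      using least_rep_in_Rof[OF fd] eq_least_rep_if_prec_op[OF fd] RC_D(1) Rof_subset_RC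
      by blast
  qed
  then show ?thesis
    by (simp add: block_arity_def)
qed

lemma proj_op_in_RC:
  assumes i: "1 \<le> i" "i \<le> n"
  shows "proj_op n i \<in> RC q e"
proof (rule RC_I)
  have at_es_proj: "at_es (proj_op n i) = e i"
    using i by (simp add: proj_op_def snd_mk_op)
  have "indep q e (e i) j" if "i < j" for j
    unfolding indep_def using i that by (subst q_e_nth) (auto simp: nth_append)
  then have "finite_dim q e (e i) \<and> dim q e (e i) \<le> n"
    using i by (intro finite_dim_dim_leI) auto
  then show "finite_dim q e (at_es (proj_op n i))" "dim q e (at_es (proj_op n i)) \<le> fst (proj_op n i)"
    using at_es_proj by (auto simp: proj_op_def)
  show "snd (proj_op n i) as = q (fst (proj_op n i)) (at_es (proj_op n i)) as"
    if "length as = fst (proj_op n i)" for as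
    using that i at_es_proj by (simp add: proj_op_def snd_mk_op q_e_nth)
qed (simp add: proj_op_def)

lemma sig_op_in_RC: "mk_op (ar s) (sig s) \<in> RC q e"
proof (rule RC_I)
  let ?k = "ar s" and ?c = "sig s (es e (ar s))"
  have "indep q e ?c j" if j: "?k < j" for j
  proof -
    let ?u = "map e [1..<j] @ [e (Suc j)]"
    have "q j ?c ?u = sig s (take ?k ?u)"
      using j by (simp add: q_sig map_q_es)
    also have "take ?k ?u = es e ?k"
      using j map_upt_eq_es[of j e] take_es[of ?k "j - 1" e] by simp
    finally show ?thesis
      by (simp add: indep_def)
  qed
  then have "finite_dim q e ?c \<and> dim q e ?c \<le> ?k"
    by (intro finite_dim_dim_leI) auto
  then show "finite_dim q e (at_es (mk_op ?k (sig s)))"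
    "dim q e (at_es (mk_op ?k (sig s))) \<le> fst (mk_op ?k (sig s))"
    by (auto simp: snd_mk_op)
  show "snd (mk_op ?k (sig s)) as = q (fst (mk_op ?k (sig s))) (at_es (mk_op ?k (sig s))) as"
    if "length as = fst (mk_op ?k (sig s))" for as
    using that by (simp add: snd_mk_op q_sig map_q_es)
qed simp

lemma compose_op_in_RC:
  assumes F: "F \<in> RC q e" and lG: "length Gs = fst F"
    and Gs: "\<forall>G\<in>set Gs. G \<in> RC q e \<and> fst G = n"
  shows "compose_op F n Gs \<in> RC q e"
proof -
  let ?H = "compose_op F n Gs" and ?k = "fst F"
  define cs where "cs = map (\<lambda>G. snd G (es e n)) Gs"
  have lc: "length cs = ?k"
    using lG by (simp add: cs_def)
  have fd: "finite_dim q e (at_es F)" and dk: "dim q e (at_es F) \<le> ?k"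
    using RC_D(2,3)[OF F] by auto
  have H_eq: "snd ?H xs = q ?k (at_es F) (map (\<lambda>y. q n y xs) cs)" if l: "length xs = n" for xs
  proof -
    have "map (\<lambda>G. snd G xs) Gs = map (\<lambda>y. q n y xs) cs"
      unfolding cs_def map_map
    proof (rule map_cong[OF refl])
      fix G
      assume "G \<in> set Gs"
      with Gs have "G \<in> RC q e" "fst G = n"
        by auto
      then show "snd G xs = ((\<lambda>y. q n y xs) \<circ> (\<lambda>G. snd G (es e n))) G"
        using RC_D(4)[of G xs] l by simp
    qed
    moreover have "snd ?H xs = q ?k (at_es F) (map (\<lambda>G. snd G xs) Gs)"
      using RC_D(4)[OF F, of "map (\<lambda>G. snd G xs) Gs"] l lG by (simp add: compose_op_def snd_mk_op)
    ultimately show ?thesis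
      by simp
  qed
  have at_es_H: "at_es ?H = q ?k (at_es F) cs"
    using H_eq[of "es e n"] by (simp add: compose_op_def q_es)
  have "indep q e y j" if y: "y \<in> set cs" and j: "n < j" for y j
  proof -
    obtain G where G: "G \<in> set Gs" and y_eq: "y = snd G (es e n)"
      using y by (auto simp: cs_def)
    with Gs have GR: "G \<in> RC q e" and fG: "fst G = n"
      by auto
    then have "indep q e (at_es G) j"
      using indep_if_dim_less[OF RC_D(2)[OF GR]] RC_D(3)[OF GR] j by simp
    then show ?thesis
      using y_eq fG by simp
  qed
  then have "indep q e (at_es ?H) j" if "n < j" for j
    using indep_q[OF fd dk lc] that at_es_H by simp
  then have "finite_dim q e (at_es ?H) \<and> dim q e (at_es ?H) \<le> n"
    by (rule finite_dim_dim_leI)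
  then show ?thesis
    using H_eq q_q_finite_dim[OF fd dk lc] at_es_H
    by (intro RC_I) (auto simp: compose_op_def)
qed

lemma restriction_in_RC:
  assumes F: "F \<in> RC q e" and fF: "fst F = Suc n"
    and nd: "\<forall>xs b b'. length xs = n \<longrightarrow> snd F (xs @ [b]) = snd F (xs @ [b'])"
  shows "mk_op n (\<lambda>xs. snd F (xs @ [undefined])) \<in> RC q e"
proof -
  let ?H = "mk_op n (\<lambda>xs. snd F (xs @ [undefined]))"
  have at_es_F: "at_es F = snd F (es e n @ [e (Suc n)])"
    using fF by (simp add: es_Suc)
  have at_es_H: "at_es ?H = at_es F"
    using nd at_es_F by (simp add: snd_mk_op)
  have fd: "finite_dim q e (at_es F)" and dF: "dim q e (at_es F) \<le> Suc n"
    using RC_D(2,3)[OF F] fF by auto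
  have "q (Suc n) (at_es F) (map e [1..<Suc n] @ [e (Suc (Suc n))])
      = snd F (es e n @ [e (Suc (Suc n))])"
    using RC_D(4)[OF F, of "es e n @ [e (Suc (Suc n))]"] fF by (simp add: es_def)
  also have "\<dots> = at_es F"
    using nd at_es_F by simp
  finally have "indep q e (at_es F) (Suc n)"
    by (simp add: indep_def)
  then have dn: "dim q e (at_es F) \<le> n"
    using not_indep_dim[OF fd] dF by (cases "dim q e (at_es F) = Suc n") auto
  have "snd ?H xs = q n (at_es F) xs" if "length xs = n" for xs
    using RC_D(4)[OF F, of "xs @ [undefined]"] q_eq_q_take[OF fd dn, of "Suc n" "xs @ [undefined]"]
      fF that by (simp add: snd_mk_op)
  then show ?thesis
    using at_es_H fd dn by (intro RC_I) auto
qed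

lemma is_clone_RC: "is_clone ar sig (RC q e)"
  unfolding is_clone_def
  using RC_D(1) proj_op_in_RC sig_op_in_RC compose_op_in_RC restriction_in_RC
  by (auto simp: Ops_def)

end

theorem proposition7p4:
  fixes ar :: "'s \<Rightarrow> nat" and sig :: "'s \<Rightarrow> 'a list \<Rightarrow> 'a"
    and q :: "nat \<Rightarrow> 'a \<Rightarrow> 'a list \<Rightarrow> 'a" and e :: "nat \<Rightarrow> 'a"
    and a b :: 'a
  assumes C: "clone_algebra ar sig q e"
    and a: "a \<in> Fi q e" and b: "b \<in> Fi q e"
  shows "(\<forall>F\<in>RC q e. \<forall>G\<in>RC q e.
            similar F G \<longleftrightarrow> snd F (es e (fst F)) = snd G (es e (fst G)))
       \<and> is_block (Rof q e a)
       \<and> (Rof q e a = Rof q e b \<longrightarrow> a = b)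
       \<and> RC q e = (\<Union>c\<in>Fi q e. Rof q e c) \<and> is_clone ar sig (RC q e)
       \<and> (\<forall>k. block_arity (Rof q e a) = k \<longleftrightarrow> dim q e a = k)"
proof -
  interpret clone_alg ar sig q e
    using C by unfold_locales
  have fa: "finite_dim q e a"
    using a by (simp add: Fi_def)
  have "is_block (Rof q e a)"
    unfolding is_block_def using Rof_eq_similar_least_rep[OF fa]
    by (intro bexI[of _ "least_rep a"]) (auto simp: Ops_def least_rep_def)
  moreover have "Rof q e a = Rof q e b \<longrightarrow> a = b"
    using least_rep_in_Rof[OF fa] by (auto simp: Rof_def)
  moreover have "RC q e = (\<Union>c\<in>Fi q e. Rof q e c)"
    using RC_D(2) by (auto simp: Rof_def Fi_def)
  ultimately show ?thesis
    using similar_iff_at_es_eq is_clone_RC block_arity_Rof[OF fa] by auto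
qed

end
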